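(* Let $F(x)=\frac{1-\sqrt{1-4x}}{2x}=\sum_{n\ge0}\frac{1}{n+1}\binom{2n}{n}x^n$ be the generating function of the Catalan numbers. Let $k$ be a positive integer and $m\in\mathbb{N}$. Then $D_{2k,1-k-m}(N)=0$ for $N=1,\dots,m+k-1$ and $D_{2k,1-k-m}(n+m+k)=(-1)^{\binom{m+k}{2}}D_{2k,1-k+m}(n)$ for all $n\in\mathbb{N}$; and $D_{2k-1,2-k-m}(N)=0$ for $N=1,\dots,m+k-2$ and $D_{2k-1,2-k-m}(n+m+k-1)=(-1)^{\binom{m+k-1}{2}}D_{2k-1,1-k+m}(n)$ for all $n\in\mathbb{N}$.
   Context: For a power series $F(x)=\sum_{n\ge0}a_nx^n$ and $K\ge1$, write $F(x)^K=\sum_{n\ge0}a_{K,n}x^n$ and set $a_{K,n}=0$ for $n<0$. For $M\in\mathbb{Z}$ and $K,N\in\mathbb{N}$ with $K\ge1$, define the shifted Hankel determinant $D_{K,M}(N)=\det(a_{K,i+j+M})_{i,j=0}^{N-1}$, with $D_{K,M}(0)=1$. $\mathbb{N}=\{0,1,2,\dots\}$. *)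

theory Defs
  imports "HOL-Computational_Algebra.Formal_Power_Series" "Jordan_Normal_Form.Determinant"
begin

definition catalan_fps :: "rat fps" where
  "catalan_fps = Abs_fps (\<lambda>n. of_nat ((2*n) choose n) / of_nat (n+1))"

definition aK :: "rat fps \<Rightarrow> nat \<Rightarrow> int \<Rightarrow> rat" where
  "aK F K n = (if n < 0 then 0 else fps_nth (F ^ K) (nat n))"

text \<open>Shifted Hankel determinant D_{K,M}(N) = det (a_{K,i+j+M})_{i,j=0}^{N-1}; D(0) = det of 0x0 matrix = 1.\<close>
definition hankel_det :: "rat fps \<Rightarrow> nat \<Rightarrow> int \<Rightarrow> nat \<Rightarrow> rat" where
  "hankel_det F K M N = det (mat N N (\<lambda>(i,j). aK F K (int i + int j + M)))"

end

theory Submission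
  imports Defs
begin

text \<open>
  Write \<open>f = F\<^sup>K\<close> and \<open>y = x F\<close>. The Catalan equation \<open>F = 1 + x F\<^sup>2\<close> gives
  \<open>F (1 - y) = 1\<close> and \<open>y (1 - y) = x\<close>, so \<open>g = (1 - y)\<^sup>K\<close> is the inverse of \<open>f\<close>.
  Multiplying the Hankel matrix with entries \<open>f (i + j + 1 - L)\<close> of size \<open>L + n\<close> on the right
  by the upper unitriangular Toeplitz matrix of \<open>g\<close> makes it block lower triangular: its first
  \<open>L\<close> rows become the anti-identity, and its last \<open>n \<times> n\<close> block is a unitriangular matrix
  times the Hankel matrix with entries \<open>- g (i + j + L + 1)\<close>. Finally \<open>y\<^sup>K + (1 - y)\<^sup>K\<close> is a
  polynomial in \<open>y (1 - y) = x\<close> of degree at most \<open>K / 2\<close>, so \<open>- g t = [x\<^sup>t] y\<^sup>K = f (t - K)\<close>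
  whenever \<open>2 t > K\<close>.
\<close>

definition fps_nth_int :: "'a::zero fps \<Rightarrow> int \<Rightarrow> 'a" where
  "fps_nth_int f t = (if t < 0 then 0 else fps_nth f (nat t))"

lemma fps_nth_int_diff: "fps_nth_int f (int s - int p) = fps_nth (fps_X ^ p * f) s"
  by (simp add: fps_nth_int_def fps_X_power_mult_nth nat_diff_distrib)

lemma fps_mult_eq_1_tail:
  fixes f g :: "'a::comm_ring_1 fps"
  assumes "f * g = 1"
  shows "(\<Sum>s=0..j. fps_nth f (i + s + 1) * fps_nth g (j - s))
       = - (\<Sum>r=0..i. fps_nth f (i - r) * fps_nth g (r + j + 1))"
proof -
  let ?c = "\<lambda>u. fps_nth f u * fps_nth g (i + (j + 1) - u)"
  have "0 = fps_nth (f * g) (i + (j + 1))"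
    using assms by simp
  also have "\<dots> = sum ?c {0..i} + sum ?c {i + 1..i + (j + 1)}"
    unfolding fps_mult_nth by (rule sum.ub_add_nat) simp
  also have "sum ?c {0..i} = (\<Sum>r=0..i. fps_nth f (i - r) * fps_nth g (r + j + 1))"
    by (subst sum.atLeastAtMost_rev) (intro sum.cong; simp add: algebra_simps)
  also have "sum ?c {i + 1..i + (j + 1)} = (\<Sum>s=0..j. fps_nth f (i + s + 1) * fps_nth g (j - s))"
    using sum.shift_bounds_cl_nat_ivl[of ?c 0 "i + 1" j] by (simp add: algebra_simps)
  finally show ?thesis
    by (simp add: eq_neg_iff_add_eq_0 add.commute)
qed

lemma fps_mult_eq_1_shifted_conv:
  fixes f g :: "'a::comm_ring_1 fps"
  assumes "f * g = 1" and "i < L"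
  shows "(\<Sum>s=0..j. fps_nth_int f (int i + int s + 1 - int L) * fps_nth g (j - s))
       = (if i + j + 1 = L then 1 else 0)"
proof -
  define p where "p = L - 1 - i"
  have "(\<Sum>s=0..j. fps_nth_int f (int i + int s + 1 - int L) * fps_nth g (j - s))
      = (\<Sum>s=0..j. fps_nth (fps_X ^ p * f) s * fps_nth g (j - s))"
  proof (rule sum.cong)
    fix s
    have "int i + int s + 1 - int L = int s - int p"
      using assms(2) by (simp add: p_def of_nat_diff)
    then show "fps_nth_int f (int i + int s + 1 - int L) * fps_nth g (j - s)
        = fps_nth (fps_X ^ p * f) s * fps_nth g (j - s)"
      by (simp only: fps_nth_int_diff)
  qed simp
  also have "\<dots> = fps_nth (fps_X ^ p * f * g) j"
    by (simp add: fps_mult_nth)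
  also have "\<dots> = (if i + j + 1 = L then 1 else 0)"
    using assms by (auto simp: mult.assoc fps_X_power_nth p_def)
  finally show ?thesis .
qed

definition antidiag_mat :: "nat \<Rightarrow> 'a::{zero,one} mat" where
  "antidiag_mat n = mat n n (\<lambda>(i, j). if i + j + 1 = n then 1 else 0)"

lemma det_antidiag_mat: "det (antidiag_mat n :: 'a::idom mat) = (-1) ^ (n choose 2)"
proof (induction n)
  case 0
  show ?case by (simp add: antidiag_mat_def numeral_2_eq_2)
next
  case (Suc n)
  have "antidiag_mat (Suc n) \<in> carrier_mat (1 + n) (1 + n)"
    by (simp add: antidiag_mat_def)
  from det_swap_rows[OF this]
  have "det (antidiag_mat (Suc n) :: 'a mat) = (-1) ^ n *
      det (mat (1 + n) (1 + n) (\<lambda>(i, j). antidiag_mat (Suc n) $$ (if i < 1 then i + n else i - 1, j)))"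
    by simp
  also have "mat (1 + n) (1 + n) (\<lambda>(i, j). antidiag_mat (Suc n) $$ (if i < 1 then i + n else i - 1, j))
      = four_block_mat (1\<^sub>m 1) (0\<^sub>m 1 n) (0\<^sub>m n 1) (antidiag_mat n)"
    by (rule eq_matI) (auto simp: antidiag_mat_def)
  also have "det \<dots> = det (1\<^sub>m 1 :: 'a mat) * det (antidiag_mat n :: 'a mat)"
    by (rule det_four_block_mat_upper_right_zero) (auto simp: antidiag_mat_def)
  finally show ?case
    using Suc.IH by (simp add: numeral_2_eq_2 power_add)
qed

lemma hankel_mult_unitriangular_eq_four_block:
  fixes f g :: "'a::comm_ring_1 fps" and L n :: nat
  assumes fg: "f * g = 1"
  defines "H \<equiv> mat (L + n) (L + n) (\<lambda>(i, j). fps_nth_int f (int i + int j + 1 - int L))"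
    and "V \<equiv> mat (L + n) (L + n) (\<lambda>(s, j). if s \<le> j then fps_nth g (j - s) else 0)"
    and "T \<equiv> mat n n (\<lambda>(i, r). if r \<le> i then fps_nth f (i - r) else 0)"
    and "D \<equiv> mat n n (\<lambda>(i, j). - fps_nth g (i + j + L + 1))"
  shows "H * V = four_block_mat (antidiag_mat L) (0\<^sub>m L n) (mat n L (\<lambda>(i, j). (H * V) $$ (i + L, j))) (T * D)"
    (is "_ = ?B")
proof (rule eq_matI)
  fix i j
  assume "i < dim_row ?B" and "j < dim_col ?B"
  then have i: "i < L + n" and j: "j < L + n"
    by (auto simp: antidiag_mat_def T_def D_def)
  have HV: "(H * V) $$ (i, j) = (\<Sum>s=0..j. fps_nth_int f (int i + int s + 1 - int L) * fps_nth g (j - s))"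
    using i j by (simp add: H_def V_def scalar_prod_def) (rule sum.mono_neutral_cong_right; auto)
  consider "i < L" | "L \<le> i" "j < L" | i' j' where "i = i' + L" "j = j' + L" "i' < n" "j' < n"
    using i j by (metis add.commute le_Suc_ex linorder_not_le nat_add_left_cancel_less)
  then show "(H * V) $$ (i, j) = ?B $$ (i, j)"
  proof cases
    case 1
    then show ?thesis
      using i j by (simp add: HV fps_mult_eq_1_shifted_conv[OF fg] antidiag_mat_def T_def D_def)
  next
    case 2
    then show ?thesis
      using i j by (simp add: antidiag_mat_def T_def D_def)
  next
    case (3 i' j')
    have "(T * D) $$ (i', j') = (\<Sum>r=0..i'. fps_nth f (i' - r) * - fps_nth g (r + j + 1))"
      using 3 by (simp add: T_def D_def scalar_prod_def algebra_simps)
        (rule sum.mono_neutral_cong_right; auto)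
    also have "\<dots> = (\<Sum>s=0..j. fps_nth f (i' + s + 1) * fps_nth g (j - s))"
      unfolding fps_mult_eq_1_tail[OF fg] mult_minus_right sum_negf ..
    also have "\<dots> = (H * V) $$ (i, j)"
      unfolding HV using 3 by (intro sum.cong) (simp_all add: fps_nth_int_def nat_add_distrib)
    finally show ?thesis
      using 3 by (simp add: antidiag_mat_def T_def D_def)
  qed
qed (simp_all add: H_def V_def antidiag_mat_def T_def D_def)

lemma det_hankel_fps_mult_eq_1:
  fixes f g :: "'a::idom fps"
  assumes fg: "f * g = 1" and f0: "fps_nth f 0 = 1"
  shows "det (mat (L + n) (L + n) (\<lambda>(i, j). fps_nth_int f (int i + int j + 1 - int L)))
       = (-1) ^ (L choose 2) * det (mat n n (\<lambda>(i, j). - fps_nth g (i + j + L + 1)))"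
    (is "det ?H = _ * det ?D")
proof -
  let ?V = "mat (L + n) (L + n) (\<lambda>(s, j). if s \<le> j then fps_nth g (j - s) else 0)"
  let ?T = "mat n n (\<lambda>(i, r). if r \<le> i then fps_nth f (i - r) else 0)"
  have g0: "fps_nth g 0 = 1"
    using arg_cong[OF fg, of "\<lambda>h. fps_nth h 0"] f0 by simp
  have "det ?V = 1"
    by (subst det_upper_triangular[of _ "L + n"])
      (auto simp: upper_triangular_def prod_list_diag_prod g0)
  moreover have "det ?T = 1"
    by (subst det_lower_triangular[of n]) (auto simp: prod_list_diag_prod f0)
  moreover have "det (?H * ?V) = det (antidiag_mat L) * det (?T * ?D)"
    by (subst hankel_mult_unitriangular_eq_four_block[OF fg])
      (rule det_four_block_mat_upper_right_zero; auto simp: antidiag_mat_def)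
  ultimately show ?thesis
    by (simp add: det_mult[of _ "L + n"] det_mult[of _ n] det_antidiag_mat)
qed

lemma fps_nth_power_add_complement_eq_0:
  fixes y :: "'a::comm_ring_1 fps"
  assumes y: "y * (1 - y) = fps_X" and "n < 2 * t"
  shows "fps_nth (y ^ n + (1 - y) ^ n) t = 0"
  using assms(2)
proof (induction n arbitrary: t rule: induct_nat_012)
  case 0
  then show ?case by (simp add: fps_numeral_nth)
next
  case 1
  then show ?case by simp
next
  case (ge2 n)
  have "y ^ Suc (Suc n) + (1 - y) ^ Suc (Suc n)
      = (y ^ Suc n + (1 - y) ^ Suc n) - fps_X * (y ^ n + (1 - y) ^ n)"
    by (simp flip: y add: algebra_simps)
  moreover have "fps_nth (y ^ Suc n + (1 - y) ^ Suc n) t = 0"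
    using ge2.prems by (intro ge2.IH(2)) simp
  moreover have "fps_nth (fps_X * (y ^ n + (1 - y) ^ n)) t = 0"
  proof -
    obtain t' where "t = Suc t'" and "n < 2 * t'"
      using ge2.prems by (cases t) auto
    then show ?thesis
      using ge2.IH(1) by (simp add: fps_X_mult_nth)
  qed
  ultimately show ?case
    by simp
qed

lemma central_binomial_Suc:
  "(n + 1) * ((2 * n + 2) choose (n + 1)) = 2 * (2 * n + 1) * ((2 * n) choose n)"
proof -
  have "(n + 1) * ((2 * n + 2) choose (n + 1)) = 2 * ((n + 1) * ((2 * n + 1) choose n))"
    using Suc_times_binomial[of n "2 * n + 1"] by (simp del: binomial_Suc_Suc)
  also have "(2 * n + 1) choose n = (2 * n + 1) choose (n + 1)"
    using binomial_symmetric[of n "2 * n + 1"] by simp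
  also have "(n + 1) * \<dots> = (2 * n + 1) * ((2 * n) choose n)"
    using Suc_times_binomial[of n "2 * n"] by (simp del: binomial_Suc_Suc)
  finally show ?thesis by simp
qed

lemma catalan_fps_nth_Suc:
  "fps_nth catalan_fps (Suc n) = fps_nth catalan_fps n * (2 * (2 * of_nat n + 1)) / (of_nat n + 2)"
proof -
  have "(of_nat n + 1) * of_nat ((2 * n + 2) choose (n + 1))
      = 2 * (2 * of_nat n + 1) * (of_nat ((2 * n) choose n) :: rat)"
    by (metis (mono_tags) central_binomial_Suc of_nat_1 of_nat_add of_nat_mult of_nat_numeral)
  then have "of_nat ((2 * n + 2) choose (n + 1))
      = (of_nat ((2 * n) choose n) / (of_nat n + 1) * (2 * (2 * of_nat n + 1)) :: rat)"
    by (simp add: field_simps del: binomial_Suc_Suc)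
  also have "of_nat ((2 * n) choose n) / (of_nat n + 1) = fps_nth catalan_fps n"
    by (simp add: catalan_fps_def)
  moreover have "fps_nth catalan_fps (Suc n) = of_nat ((2 * n + 2) choose (n + 1)) / (of_nat n + 2)"
    by (simp add: catalan_fps_def add_ac mult_2 del: binomial_Suc_Suc)
  ultimately show ?thesis
    by simp
qed

lemma gbinomial_half_Suc_eq_catalan: "((1/2 :: rat) gchoose Suc n) * (-4) ^ Suc n = -2 * fps_nth catalan_fps n"
proof (induction n)
  case 0
  show ?case by (simp add: catalan_fps_def)
next
  case (Suc n)
  let ?G = "(1/2 :: rat) gchoose Suc n"
  have "of_nat (Suc (Suc n)) * ((1/2 :: rat) gchoose Suc (Suc n)) = (1/2 - of_nat (Suc n)) * ?G"
    using gbinomial_mult_1[of "1/2 :: rat" "Suc n"] by (simp add: algebra_simps)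
  then have "(1/2 :: rat) gchoose Suc (Suc n) = (1/2 - of_nat (Suc n)) * ?G / of_nat (Suc (Suc n))"
    by (simp add: eq_divide_eq mult.commute del: of_nat_Suc)
  then have "((1/2 :: rat) gchoose Suc (Suc n)) * (-4) ^ Suc (Suc n)
      = (?G * (-4) ^ Suc n) * ((1/2 - of_nat (Suc n)) * (-4) / of_nat (Suc (Suc n)))"
    by (simp only: power_Suc times_divide_eq_left times_divide_eq_right mult_ac)
  also have "(1/2 - of_nat (Suc n)) * (-4) / of_nat (Suc (Suc n)) = (2 * (2 * of_nat n + 1) / (of_nat n + 2) :: rat)"
    by (simp add: algebra_simps)
  finally show ?case
    using Suc.IH by (simp add: catalan_fps_nth_Suc)
qed

lemma one_minus_2X_catalan_fps_eq_binomial: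
  "1 - 2 * fps_X * catalan_fps = fps_binomial (1/2) oo (fps_const (-4) * fps_X)"
proof (rule fps_ext)
  fix n
  show "fps_nth (1 - 2 * fps_X * catalan_fps) n = fps_nth (fps_binomial (1/2) oo (fps_const (-4) * fps_X)) n"
    using gbinomial_half_Suc_eq_catalan[of "n - 1"]
    by (cases n) (simp_all add: fps_compose_linear numeral_fps_const mult.assoc)
qed

lemma catalan_fps_equation: "catalan_fps = 1 + fps_X * catalan_fps ^ 2"
proof -
  let ?F = catalan_fps and ?c = "fps_const (-4 :: rat) * fps_X"
  have "(1 - 2 * fps_X * ?F) ^ 2 = (fps_binomial (1/2) * fps_binomial (1/2)) oo ?c"
    by (simp add: one_minus_2X_catalan_fps_eq_binomial power2_eq_square fps_compose_mult_distrib)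
  also have "fps_binomial (1/2) * fps_binomial (1/2) = 1 + (fps_X :: rat fps)"
    by (simp flip: fps_binomial_add_mult add: fps_binomial_1)
  also have "?c = - 4 * fps_X"
    by (simp only: neg_numeral_fps_const)
  finally have "(1 - 2 * fps_X * ?F) ^ 2 = 1 - 4 * fps_X"
    by (simp add: fps_compose_add_distrib)
  then have "(4 * fps_X) * (?F - (1 + fps_X * ?F ^ 2)) = 0"
    by (simp add: algebra_simps power2_eq_square)
  moreover have "4 * fps_X \<noteq> (0 :: rat fps)"
    by (metis fps_X_neq_zero mult_eq_0_iff zero_neq_numeral)
  ultimately show ?thesis
    by simp
qed

lemma catalan_fps_mult_one_minus: "catalan_fps * (1 - fps_X * catalan_fps) = 1"
  using catalan_fps_equation by (simp add: algebra_simps power2_eq_square)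

lemma X_catalan_fps_mult_one_minus: "fps_X * catalan_fps * (1 - fps_X * catalan_fps) = fps_X"
  using catalan_fps_mult_one_minus by (metis mult.assoc mult.right_neutral)

lemma fps_nth_one_minus_X_catalan_fps_power:
  assumes "K < 2 * t"
  shows "- fps_nth ((1 - fps_X * catalan_fps) ^ K) t = fps_nth_int (catalan_fps ^ K) (int t - int K)"
proof -
  have "- fps_nth ((1 - fps_X * catalan_fps) ^ K) t = fps_nth (fps_X ^ K * catalan_fps ^ K) t"
    using fps_nth_power_add_complement_eq_0[OF X_catalan_fps_mult_one_minus assms]
    by (simp add: power_mult_distrib eq_neg_iff_add_eq_0)
  then show ?thesis
    by (simp add: fps_nth_int_diff)
qed

lemma hankel_det_catalan_fps_shift:
  assumes "K < 2 * (L + 1)"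
  shows "hankel_det catalan_fps K (1 - int L) (L + n)
       = (-1) ^ (L choose 2) * hankel_det catalan_fps K (int L + 1 - int K) n"
proof -
  let ?f = "catalan_fps ^ K" and ?g = "(1 - fps_X * catalan_fps) ^ K"
  have fg: "?f * ?g = 1"
    by (simp flip: power_mult_distrib add: catalan_fps_mult_one_minus)
  have f0: "fps_nth ?f 0 = 1"
    by (simp add: fps_power_zeroth catalan_fps_def)
  have "hankel_det catalan_fps K (1 - int L) (L + n)
      = det (mat (L + n) (L + n) (\<lambda>(i, j). fps_nth_int ?f (int i + int j + 1 - int L)))"
    by (simp add: hankel_det_def aK_def fps_nth_int_def add_diff_eq)
  also have "\<dots> = (-1) ^ (L choose 2) * det (mat n n (\<lambda>(i, j). - fps_nth ?g (i + j + L + 1)))"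
    by (rule det_hankel_fps_mult_eq_1[OF fg f0])
  also have "mat n n (\<lambda>(i, j). - fps_nth ?g (i + j + L + 1))
      = mat n n (\<lambda>(i, j). aK catalan_fps K (int i + int j + (int L + 1 - int K)))"
  proof (rule cong_mat)
    fix i j
    have "- fps_nth ?g (i + j + L + 1) = fps_nth_int ?f (int (i + j + L + 1) - int K)"
      using assms by (intro fps_nth_one_minus_X_catalan_fps_power) simp
    then show "(\<lambda>(i, j). - fps_nth ?g (i + j + L + 1)) (i, j)
        = (\<lambda>(i, j). aK catalan_fps K (int i + int j + (int L + 1 - int K))) (i, j)"
      by (simp add: aK_def fps_nth_int_def algebra_simps)
  qed simp_all
  finally show ?thesis
    by (simp add: hankel_det_def)
qed

lemma hankel_det_eq_0_if_negative_first_row: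
  assumes "0 < N" and "int N + M \<le> 0"
  shows "hankel_det F K M N = 0"
proof -
  have "mat N N (\<lambda>(i, j). aK F K (int i + int j + M))
      = mat\<^sub>r N N (\<lambda>i. if i = 0 then 0\<^sub>v N else vec N (\<lambda>j. aK F K (int i + int j + M)))"
    using assms(2) by (intro eq_matI) (auto simp: aK_def)
  then show ?thesis
    unfolding hankel_det_def using assms(1) by (simp add: det_row_0)
qed

theorem theorem1p1:
  fixes k m :: nat
  assumes "k \<ge> 1"
  shows "(\<forall>N. 1 \<le> N \<and> N \<le> m + k - 1 \<longrightarrow>
            hankel_det catalan_fps (2*k) (1 - int k - int m) N = 0)
       \<and> (\<forall>n. hankel_det catalan_fps (2*k) (1 - int k - int m) (n + m + k) =
            (-1) ^ ((m + k) choose 2) * hankel_det catalan_fps (2*k) (1 - int k + int m) n)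
       \<and> (\<forall>N. 1 \<le> N \<and> N \<le> m + k - 2 \<longrightarrow>
            hankel_det catalan_fps (2*k - 1) (2 - int k - int m) N = 0)
       \<and> (\<forall>n. hankel_det catalan_fps (2*k - 1) (2 - int k - int m) (n + m + k - 1) =
            (-1) ^ ((m + k - 1) choose 2) * hankel_det catalan_fps (2*k - 1) (1 - int k + int m) n)"
proof (intro conjI allI impI)
  fix N
  assume "1 \<le> N \<and> N \<le> m + k - 1"
  then show "hankel_det catalan_fps (2*k) (1 - int k - int m) N = 0"
    by (intro hankel_det_eq_0_if_negative_first_row) auto
next
  fix n
  show "hankel_det catalan_fps (2*k) (1 - int k - int m) (n + m + k) =
      (-1) ^ ((m + k) choose 2) * hankel_det catalan_fps (2*k) (1 - int k + int m) n"
    using hankel_det_catalan_fps_shift[of "2*k" "m + k" n] by (simp add: algebra_simps)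
next
  fix N
  assume "1 \<le> N \<and> N \<le> m + k - 2"
  then show "hankel_det catalan_fps (2*k - 1) (2 - int k - int m) N = 0"
    by (intro hankel_det_eq_0_if_negative_first_row) auto
next
  fix n
  show "hankel_det catalan_fps (2*k - 1) (2 - int k - int m) (n + m + k - 1) =
      (-1) ^ ((m + k - 1) choose 2) * hankel_det catalan_fps (2*k - 1) (1 - int k + int m) n"
    using hankel_det_catalan_fps_shift[of "2*k - 1" "m + k - 1" n] assms
    by (simp add: algebra_simps of_nat_diff)
qed

end
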